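(* Let $\sigma$ be a ruled submanifold of degree $d$. Then at every regular point $p$ of $\sigma$ the first normal space satisfies $d-1 \le \dim N^{1}_{p}\sigma \le d+1$.
   Context: Ruled submanifold: given an open interval $I$, a smooth unit-speed curve $\gamma \colon I \to \mathbb{R}^{m+n}$ and smooth vector fields $X_{1},\dotsc,X_{m-1}$ along $\gamma$ that are orthonormal at each $t$, define $\sigma(t,u^{1},\dotsc,u^{m-1})=\gamma(t)+\sum_{j=1}^{m-1}u^{j}X_{j}(t)$ on $I\times\mathbb{R}^{m-1}$. A point is regular if $d\sigma$ is injective there. Degree: for a subbundle $\mathcal{E}$ of $T\mathbb{R}^{m+n}|_{\gamma}$, define $\rho_{t}\colon\mathcal{E}_{t}\to\mathcal{E}_{t}^{\perp}$ by $v\mapsto\pi^{\perp}(dV/dt(t))$. Here $V$ is any smooth local section of $\mathcal{E}$ with $V(t)=v$, and $\pi^{\perp}$ is orthogonal projection onto $\mathcal{E}_{t}^{\perp}$. The degree of $\mathcal{E}$ at $t$ is $\operatorname{rank}\rho_{t}$. The submanifold $\sigma$ is of degree $d$ if the ruling distribution $\mathcal{D}_{t}=\operatorname{Span}(X_{j}(t))_{j=1}^{m-1}$ has degree $d$ at every $t$. The first normal space $N^{1}_{p}\sigma$ at a regular point $p$ is the linear span of the image of the second fundamental form of $\sigma$ at $p$ (a subspace of the normal space). *)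

theory Defs
  imports "HOL-Analysis.Analysis"
begin

fun vderiv :: "nat \<Rightarrow> (real \<Rightarrow> 'a::real_normed_vector) \<Rightarrow> real \<Rightarrow> 'a" where
  "vderiv 0 f = f"
| "vderiv (Suc k) f = (\<lambda>t. vector_derivative (vderiv k f) (at t))"

definition smooth_curve_on :: "real set \<Rightarrow> (real \<Rightarrow> 'a::real_normed_vector) \<Rightarrow> bool" where
  "smooth_curve_on I f \<longleftrightarrow> (\<forall>k. \<forall>t\<in>I. vderiv k f differentiable (at t))"

definition orth_proj :: "'a::euclidean_space set \<Rightarrow> 'a \<Rightarrow> 'a" where
  "orth_proj S w = (THE p. p \<in> S \<and> w - p \<in> orthogonal_comp S)"

definition local_section :: "(real \<Rightarrow> 'a::euclidean_space set) \<Rightarrow> real \<Rightarrow> (real \<Rightarrow> 'a) \<Rightarrow> bool" where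
  "local_section E t V \<longleftrightarrow>
     (\<exists>e>0. smooth_curve_on (ball t e) V \<and> (\<forall>s\<in>ball t e. V s \<in> E s))"

definition rho_map :: "(real \<Rightarrow> 'a::euclidean_space set) \<Rightarrow> real \<Rightarrow> 'a \<Rightarrow> 'a" where
  "rho_map E t v = (THE w. \<forall>V. local_section E t V \<and> V t = v \<longrightarrow>
        orth_proj (orthogonal_comp (E t)) (vector_derivative V (at t)) = w)"

definition degree_at :: "(real \<Rightarrow> 'a::euclidean_space set) \<Rightarrow> real \<Rightarrow> nat" where
  "degree_at E t = dim (rho_map E t ` E t)"

definition ruling_distr :: "('k \<Rightarrow> real \<Rightarrow> 'a::euclidean_space) \<Rightarrow> real \<Rightarrow> 'a set" where
  "ruling_distr X t = span (range (\<lambda>j. X j t))"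

definition ruled_map :: "(real \<Rightarrow> 'a::euclidean_space) \<Rightarrow> ('k::finite \<Rightarrow> real \<Rightarrow> 'a)
    \<Rightarrow> real \<times> (real ^ 'k) \<Rightarrow> 'a" where
  "ruled_map \<gamma> X p = \<gamma> (fst p) + (\<Sum>j\<in>UNIV. (snd p $ j) *\<^sub>R X j (fst p))"

definition second_deriv :: "('b::real_normed_vector \<Rightarrow> 'a::real_normed_vector) \<Rightarrow> 'b \<Rightarrow> 'b \<Rightarrow> 'b \<Rightarrow> 'a" where
  "second_deriv f x h k = frechet_derivative (\<lambda>y. frechet_derivative f (at y) h) (at x) k"

definition regular_point :: "('b::real_normed_vector \<Rightarrow> 'a::real_normed_vector) \<Rightarrow> 'b \<Rightarrow> bool" where
  "regular_point f x \<longleftrightarrow> f differentiable (at x) \<and> inj (frechet_derivative f (at x))"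

definition normal_space :: "('b::real_normed_vector \<Rightarrow> 'a::euclidean_space) \<Rightarrow> 'b \<Rightarrow> 'a set" where
  "normal_space f x = orthogonal_comp (range (frechet_derivative f (at x)))"

definition second_fund_form :: "('b::real_normed_vector \<Rightarrow> 'a::euclidean_space) \<Rightarrow> 'b \<Rightarrow> 'b \<Rightarrow> 'b \<Rightarrow> 'a" where
  "second_fund_form f x h k = orth_proj (normal_space f x) (second_deriv f x h k)"

definition first_normal_space :: "('b::real_normed_vector \<Rightarrow> 'a::euclidean_space) \<Rightarrow> 'b \<Rightarrow> 'a set" where
  "first_normal_space f x = span {second_fund_form f x h k | h k. True}"

end

theory Submission
  imports Defs
begin

text \<open>At a parameter point (t, u) the tangent space of the ruled map is T = span (A, D),
  where D is the ruling at t and A = \<gamma>' + \<Sum>j u_j X_j'; the second derivatives span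
  B = \<gamma>'' + \<Sum>j u_j X_j'' together with the X_j'. So the first normal space is the image of
  span (B, X_j') under the projection P onto the orthogonal complement of T, and its dimension is
  dim P(S) or dim P(S) + 1, where S = span X_j'. The degree, computed by differentiating the frame
  expansion of a section, is dim Q(S) for the projection Q onto the orthogonal complement of D.
  As D \<subseteq> T, P factors through Q, and Q s - P s lies in the line through Q A; hence
  dim P(S) \<le> dim Q(S) \<le> dim P(S) + 1, and the two estimates give the bounds d - 1 and d + 1.\<close>

section \<open>Orthogonal projection\<close>

lemma orth_proj_unique:
  fixes U :: "'a::euclidean_space set"
  assumes U: "subspace U"
    and p: "p \<in> U" "w - p \<in> U\<^sup>\<bottom>" and q: "q \<in> U" "w - q \<in> U\<^sup>\<bottom>"
  shows "p = q"
proof -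
  have "p - q \<in> U"
    by (rule subspace_diff[OF U p(1) q(1)])
  moreover have "(w - q) - (w - p) \<in> U\<^sup>\<bottom>"
    by (rule subspace_diff[OF subspace_orthogonal_comp q(2) p(2)])
  then have "p - q \<in> U\<^sup>\<bottom>"
    by simp
  ultimately have "p - q \<in> U \<inter> U\<^sup>\<bottom>"
    by (rule IntI)
  then show ?thesis
    unfolding orthogonal_Int_0[OF U] by simp
qed

lemma orth_proj:
  fixes U :: "'a::euclidean_space set"
  assumes U: "subspace U"
  shows "orth_proj U w \<in> U" "w - orth_proj U w \<in> U\<^sup>\<bottom>"
proof -
  obtain y z where y: "y \<in> span U" and z: "\<And>v. v \<in> span U \<Longrightarrow> orthogonal z v" and w: "w = y + z"
    using orthogonal_subspace_decomp_exists[of U w] by blast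
  have "y \<in> U"
    using span_minimal[OF subset_refl U] y by blast
  moreover have "orthogonal v z" if "v \<in> U" for v
    using z[OF span_base[OF that]] by (simp only: orthogonal_commute)
  then have "z \<in> U\<^sup>\<bottom>"
    unfolding orthogonal_comp_def by blast
  ultimately have decomp: "y \<in> U \<and> w - y \<in> U\<^sup>\<bottom>"
    using w by simp
  have "orth_proj U w \<in> U \<and> w - orth_proj U w \<in> U\<^sup>\<bottom>"
    unfolding orth_proj_def
  proof (rule theI)
    fix p assume "p \<in> U \<and> w - p \<in> U\<^sup>\<bottom>"
    then show "p = y"
      using decomp by (intro orth_proj_unique[OF U]) auto
  qed (fact decomp)
  then show "orth_proj U w \<in> U" "w - orth_proj U w \<in> U\<^sup>\<bottom>" by simp_all
qed

lemma orth_proj_orthogonal_comp: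
  fixes U :: "'a::euclidean_space set"
  assumes U: "subspace U"
  shows "orth_proj (U\<^sup>\<bottom>) w \<in> U\<^sup>\<bottom>" "w - orth_proj (U\<^sup>\<bottom>) w \<in> U"
  using orth_proj[OF subspace_orthogonal_comp[of U], of w] orthogonal_comp_self[OF U] by auto

lemma orth_proj_eqI:
  fixes U :: "'a::euclidean_space set"
  assumes "subspace U" "p \<in> U" "w - p \<in> U\<^sup>\<bottom>"
  shows "orth_proj U w = p"
  by (rule orth_proj_unique[OF assms(1) orth_proj[OF assms(1)] assms(2,3)])

lemma orth_proj_eq_0:
  fixes U :: "'a::euclidean_space set"
  assumes "subspace U" "w \<in> U\<^sup>\<bottom>"
  shows "orth_proj U w = 0"
  using orth_proj_eqI[OF assms(1) subspace_0[OF assms(1)]] assms(2) by simp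

lemma linear_orth_proj:
  fixes U :: "'a::euclidean_space set"
  assumes U: "subspace U"
  shows "linear (orth_proj U)"
proof (rule linearI)
  fix x y
  have "(x - orth_proj U x) + (y - orth_proj U y) \<in> U\<^sup>\<bottom>"
    by (rule subspace_add[OF subspace_orthogonal_comp orth_proj(2)[OF U] orth_proj(2)[OF U]])
  then have "(x + y) - (orth_proj U x + orth_proj U y) \<in> U\<^sup>\<bottom>"
    by (simp only: add_diff_add)
  moreover have "orth_proj U x + orth_proj U y \<in> U"
    by (rule subspace_add[OF U orth_proj(1)[OF U] orth_proj(1)[OF U]])
  ultimately show "orth_proj U (x + y) = orth_proj U x + orth_proj U y"
    by (rule orth_proj_eqI[OF U, rotated])
next
  fix c x
  have "c *\<^sub>R (x - orth_proj U x) \<in> U\<^sup>\<bottom>"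
    by (rule subspace_scale[OF subspace_orthogonal_comp orth_proj(2)[OF U]])
  then have "c *\<^sub>R x - c *\<^sub>R orth_proj U x \<in> U\<^sup>\<bottom>"
    by (simp add: scaleR_right_diff_distrib)
  moreover have "c *\<^sub>R orth_proj U x \<in> U"
    by (rule subspace_scale[OF U orth_proj(1)[OF U]])
  ultimately show "orth_proj U (c *\<^sub>R x) = c *\<^sub>R orth_proj U x"
    by (rule orth_proj_eqI[OF U, rotated])
qed

lemma orth_proj_orthogonal_comp_nested:
  fixes D T :: "'a::euclidean_space set"
  assumes D: "subspace D" and T: "subspace T" and DT: "D \<subseteq> T"
  shows "orth_proj (T\<^sup>\<bottom>) (orth_proj (D\<^sup>\<bottom>) s) = orth_proj (T\<^sup>\<bottom>) s"
proof -
  have "s - orth_proj (D\<^sup>\<bottom>) s \<in> T\<^sup>\<bottom>\<^sup>\<bottom>"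
    using orth_proj_orthogonal_comp(2)[OF D, of s] DT
    by (simp add: orthogonal_comp_self[OF T] orthogonal_comp_self[OF D] subset_iff)
  then have "orth_proj (T\<^sup>\<bottom>) (s - orth_proj (D\<^sup>\<bottom>) s) = 0"
    by (rule orth_proj_eq_0[OF subspace_orthogonal_comp])
  then show ?thesis
    by (simp add: linear_diff[OF linear_orth_proj[OF subspace_orthogonal_comp]])
qed

lemma span_insert_inter_orthogonal_comp:
  fixes D :: "'a::euclidean_space set"
  assumes D: "subspace D" and r: "r \<in> span (insert a D)" "r \<in> D\<^sup>\<bottom>"
  shows "r \<in> span {orth_proj (D\<^sup>\<bottom>) a}"
proof -
  define a' where "a' = orth_proj (D\<^sup>\<bottom>) a"
  have a': "a' \<in> D\<^sup>\<bottom>" "a - a' \<in> D"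
    unfolding a'_def by (rule orth_proj_orthogonal_comp[OF D])+
  obtain c where "r - c *\<^sub>R a \<in> span D"
    using r(1) span_breakdown_eq by blast
  then have c: "r - c *\<^sub>R a \<in> D"
    using span_minimal[OF subset_refl D] by blast
  have "(r - c *\<^sub>R a) + c *\<^sub>R (a - a') \<in> D"
    by (rule subspace_add[OF D c subspace_scale[OF D a'(2)]])
  moreover have "(r - c *\<^sub>R a) + c *\<^sub>R (a - a') = r - c *\<^sub>R a'"
    by (simp add: algebra_simps)
  moreover have "r - c *\<^sub>R a' \<in> D\<^sup>\<bottom>"
    by (rule subspace_diff[OF subspace_orthogonal_comp r(2)
          subspace_scale[OF subspace_orthogonal_comp a'(1)]])
  ultimately have "r - c *\<^sub>R a' \<in> D \<inter> D\<^sup>\<bottom>"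
    by simp
  then have "r = c *\<^sub>R a'"
    unfolding orthogonal_Int_0[OF D] by simp
  then show ?thesis
    unfolding a'_def by (simp add: span_scale span_base)
qed

lemma dim_le_Suc_if_subset_span_insert:
  fixes N A :: "'a::euclidean_space set"
  assumes "N \<subseteq> span (insert b A)"
  shows "dim N \<le> dim A + 1"
  using dim_subset[OF assms] dim_insert[of b A] by (simp split: if_splits)

lemma dim_orth_proj_orthogonal_comp_image:
  fixes D S :: "'a::euclidean_space set" and a :: 'a
  assumes D: "subspace D"
  defines "T \<equiv> span (insert a D)"
  shows "dim (orth_proj (T\<^sup>\<bottom>) ` S) \<le> dim (orth_proj (D\<^sup>\<bottom>) ` S)"
    and "dim (orth_proj (D\<^sup>\<bottom>) ` S) \<le> dim (orth_proj (T\<^sup>\<bottom>) ` S) + 1"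
proof -
  let ?P = "orth_proj (T\<^sup>\<bottom>)" and ?Q = "orth_proj (D\<^sup>\<bottom>)"
  have T: "subspace T"
    unfolding T_def by (rule subspace_span)
  have DT: "D \<subseteq> T"
    unfolding T_def using span_superset[of "insert a D"] by blast
  have "dim (?P ` ?Q ` S) \<le> dim (?Q ` S)"
    by (rule dim_image_le[OF linear_orth_proj[OF subspace_orthogonal_comp]])
  then show "dim (?P ` S) \<le> dim (?Q ` S)"
    by (simp add: image_image orth_proj_orthogonal_comp_nested[OF D T DT])
  have "?Q s \<in> span (insert (?Q a) (?P ` S))" if s: "s \<in> S" for s
  proof -
    have "s - ?P s \<in> T" "s - ?Q s \<in> T"
      using orth_proj_orthogonal_comp(2)[OF T, of s] orth_proj_orthogonal_comp(2)[OF D, of s] DT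
      by auto
    then have "(s - ?P s) - (s - ?Q s) \<in> span (insert a D)"
      unfolding T_def by (rule span_diff)
    moreover have "?Q s - ?P s \<in> D\<^sup>\<bottom>"
      using orth_proj_orthogonal_comp(1)[OF D, of s] orth_proj_orthogonal_comp(1)[OF T, of s]
        orthogonal_comp_anti_mono[OF DT]
      by (auto intro: subspace_diff[OF subspace_orthogonal_comp])
    ultimately have "?Q s - ?P s \<in> span {?Q a}"
      by (intro span_insert_inter_orthogonal_comp[OF D]) simp_all
    then have "?Q s - ?P s \<in> span (insert (?Q a) (?P ` S))"
      using span_mono[of "{?Q a}" "insert (?Q a) (?P ` S)"] by blast
    moreover have "?P s \<in> span (insert (?Q a) (?P ` S))"
      using s by (intro span_base) auto
    ultimately have "?P s + (?Q s - ?P s) \<in> span (insert (?Q a) (?P ` S))"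
      by (rule span_add[rotated])
    then show ?thesis
      by simp
  qed
  then show "dim (?Q ` S) \<le> dim (?P ` S) + 1"
    by (intro dim_le_Suc_if_subset_span_insert[where b = "?Q a"]) blast
qed

lemma dim_linear_image_span_insert:
  fixes f :: "'a::euclidean_space \<Rightarrow> 'b::euclidean_space"
  assumes f: "linear f"
  shows "dim (f ` span R) \<le> dim (f ` span (insert b R))"
    and "dim (f ` span (insert b R)) \<le> dim (f ` span R) + 1"
proof -
  show "dim (f ` span R) \<le> dim (f ` span (insert b R))"
    by (intro dim_subset image_mono span_mono) blast
  have "f ` span (insert b R) = span (insert (f b) (f ` R))"
    by (simp add: linear_span_image[OF f, symmetric])
  also have "\<dots> \<subseteq> span (insert (f b) (f ` span R))"
    by (intro span_mono insert_mono image_mono span_superset)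
  finally show "dim (f ` span (insert b R)) \<le> dim (f ` span R) + 1"
    by (rule dim_le_Suc_if_subset_span_insert)
qed

section \<open>Derivatives of the ruled map\<close>

lemma vderiv_vderiv_1: "vderiv k (vderiv 1 f) = vderiv (Suc k) f"
  by (induction k) simp_all

lemma vderiv_1_vderiv_1: "vderiv 1 (vderiv 1 f) = vderiv 2 f"
  by (simp add: vderiv_vderiv_1 numeral_2_eq_2)

lemma smooth_curve_on_vderiv_1: "smooth_curve_on S f \<Longrightarrow> smooth_curve_on S (vderiv 1 f)"
  unfolding smooth_curve_on_def vderiv_vderiv_1 by blast

lemma smooth_curve_on_has_vector_derivative:
  assumes "smooth_curve_on S f" "s \<in> S"
  shows "(vderiv k f has_vector_derivative vderiv (Suc k) f s) (at s)"
  using assms unfolding smooth_curve_on_def by (simp add: vector_derivative_works[symmetric])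

lemma smooth_curve_on_has_vector_derivative_1:
  assumes "smooth_curve_on S f" "s \<in> S"
  shows "(f has_vector_derivative vderiv 1 f s) (at s)"
  using smooth_curve_on_has_vector_derivative[OF assms, of 0] by simp

lemma has_derivative_comp_fst:
  fixes f :: "real \<Rightarrow> 'a::real_normed_vector" and u :: "'b::real_normed_vector"
  assumes "(f has_vector_derivative f') (at t)"
  shows "((\<lambda>p. f (fst p)) has_derivative (\<lambda>h. fst h *\<^sub>R f')) (at (t, u))"
  using has_derivative_compose[OF has_derivative_fst[OF has_derivative_ident, of "at (t, u)"]]
    assms[unfolded has_vector_derivative_def] by simp

lemma has_derivative_ruled_map:
  fixes \<gamma> :: "real \<Rightarrow> 'a::euclidean_space" and X :: "'k::finite \<Rightarrow> real \<Rightarrow> 'a"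
  assumes \<gamma>: "(\<gamma> has_vector_derivative \<gamma>') (at t)"
    and X: "\<And>j. (X j has_vector_derivative X' j) (at t)"
  shows "(ruled_map \<gamma> X has_derivative
      (\<lambda>h. fst h *\<^sub>R (\<gamma>' + (\<Sum>j\<in>UNIV. (u $ j) *\<^sub>R X' j)) + (\<Sum>j\<in>UNIV. (snd h $ j) *\<^sub>R X j t)))
      (at (t, u))"
proof -
  have coord: "((\<lambda>p::real \<times> (real ^ 'k). snd p $ j) has_derivative (\<lambda>h. snd h $ j)) (at (t, u))" for j
    by (rule bounded_linear.has_derivative[OF bounded_linear_vec_nth has_derivative_snd[OF has_derivative_ident]])
  have summand: "((\<lambda>p. (snd p $ j) *\<^sub>R X j (fst p)) has_derivative
      (\<lambda>h. (u $ j) *\<^sub>R (fst h *\<^sub>R X' j) + (snd h $ j) *\<^sub>R X j t)) (at (t, u))" for j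
    using has_derivative_scaleR[OF coord has_derivative_comp_fst[OF X]] by simp
  have "(ruled_map \<gamma> X has_derivative
      (\<lambda>h. fst h *\<^sub>R \<gamma>' + (\<Sum>j\<in>UNIV. (u $ j) *\<^sub>R (fst h *\<^sub>R X' j) + (snd h $ j) *\<^sub>R X j t)))
      (at (t, u))"
    unfolding ruled_map_def[abs_def]
    by (intro has_derivative_add has_derivative_sum summand has_derivative_comp_fst[OF \<gamma>])
  then show ?thesis
    by (simp add: algebra_simps scaleR_sum_right sum.distrib)
qed

lemma has_derivative_ruled_map_smooth:
  fixes \<gamma> :: "real \<Rightarrow> 'a::euclidean_space" and X :: "'k::finite \<Rightarrow> real \<Rightarrow> 'a"
  assumes \<gamma>: "smooth_curve_on I \<gamma>" and X: "\<forall>j. smooth_curve_on I (X j)" and t: "t \<in> I"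
  shows "(ruled_map \<gamma> X has_derivative
      (\<lambda>h. fst h *\<^sub>R ruled_map (vderiv 1 \<gamma>) (\<lambda>j. vderiv 1 (X j)) (t, u) + (\<Sum>j\<in>UNIV. (snd h $ j) *\<^sub>R X j t)))
      (at (t, u))"
  using has_derivative_ruled_map[OF smooth_curve_on_has_vector_derivative_1[OF \<gamma> t]
      smooth_curve_on_has_vector_derivative_1[OF X[rule_format] t]]
  by (simp add: ruled_map_def)

lemma second_deriv_ruled_map:
  fixes \<gamma> :: "real \<Rightarrow> 'a::euclidean_space" and X :: "'k::finite \<Rightarrow> real \<Rightarrow> 'a"
  assumes I: "open I" and \<gamma>: "smooth_curve_on I \<gamma>" and X: "\<forall>j. smooth_curve_on I (X j)"
    and t: "t \<in> I"
  shows "second_deriv (ruled_map \<gamma> X) (t, u) h k =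
    (fst h * fst k) *\<^sub>R ruled_map (vderiv 2 \<gamma>) (\<lambda>j. vderiv 2 (X j)) (t, u) +
    (\<Sum>j\<in>UNIV. (fst h * snd k $ j + fst k * snd h $ j) *\<^sub>R vderiv 1 (X j) t)"
proof -
  let ?\<gamma>' = "vderiv 1 \<gamma>" and ?X' = "\<lambda>j. vderiv 1 (X j)"
  have X': "\<forall>j. smooth_curve_on I (?X' j)"
    using X smooth_curve_on_vderiv_1 by blast
  have first: "frechet_derivative (ruled_map \<gamma> X) (at y) h =
      fst h *\<^sub>R ruled_map ?\<gamma>' ?X' y + (\<Sum>j\<in>UNIV. (snd h $ j) *\<^sub>R X j (fst y))"
    if "y \<in> I \<times> UNIV" for y
  proof (cases y)
    case (Pair t' u')
    with that have "t' \<in> I" by simp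
    with Pair show ?thesis
      using frechet_derivative_at[OF has_derivative_ruled_map_smooth[OF \<gamma> X], symmetric] by simp
  qed
  have "((\<lambda>y. fst h *\<^sub>R ruled_map ?\<gamma>' ?X' y + (\<Sum>j\<in>UNIV. (snd h $ j) *\<^sub>R X j (fst y))) has_derivative
      (\<lambda>k. fst h *\<^sub>R (fst k *\<^sub>R ruled_map (vderiv 1 ?\<gamma>') (\<lambda>j. vderiv 1 (?X' j)) (t, u) +
          (\<Sum>j\<in>UNIV. (snd k $ j) *\<^sub>R ?X' j t)) +
        (\<Sum>j\<in>UNIV. (snd h $ j) *\<^sub>R (fst k *\<^sub>R ?X' j t)))) (at (t, u))"
    using has_derivative_comp_fst[OF smooth_curve_on_has_vector_derivative_1[OF X[rule_format] t]]
    by (intro has_derivative_add has_derivative_scaleR_right has_derivative_sum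
        has_derivative_ruled_map_smooth[OF smooth_curve_on_vderiv_1[OF \<gamma>] X' t]) auto
  then have "((\<lambda>y. frechet_derivative (ruled_map \<gamma> X) (at y) h) has_derivative
      (\<lambda>k. fst h *\<^sub>R (fst k *\<^sub>R ruled_map (vderiv 2 \<gamma>) (\<lambda>j. vderiv 2 (X j)) (t, u) +
          (\<Sum>j\<in>UNIV. (snd k $ j) *\<^sub>R ?X' j t)) +
        (\<Sum>j\<in>UNIV. (snd h $ j) *\<^sub>R (fst k *\<^sub>R ?X' j t)))) (at (t, u))"
    unfolding vderiv_1_vderiv_1
    by (rule has_derivative_transform_within_open[OF _ open_Times[OF I open_UNIV]])
      (use t first in auto)
  then have "second_deriv (ruled_map \<gamma> X) (t, u) h k =
      fst h *\<^sub>R (fst k *\<^sub>R ruled_map (vderiv 2 \<gamma>) (\<lambda>j. vderiv 2 (X j)) (t, u) +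
          (\<Sum>j\<in>UNIV. (snd k $ j) *\<^sub>R ?X' j t)) +
        (\<Sum>j\<in>UNIV. (snd h $ j) *\<^sub>R (fst k *\<^sub>R ?X' j t))"
    unfolding second_deriv_def by (simp add: frechet_derivative_at[symmetric])
  also have "\<dots> = (fst h * fst k) *\<^sub>R ruled_map (vderiv 2 \<gamma>) (\<lambda>j. vderiv 2 (X j)) (t, u) +
    (\<Sum>j\<in>UNIV. (fst h * snd k $ j + fst k * snd h $ j) *\<^sub>R vderiv 1 (X j) t)"
    by (simp add: scaleR_add_right scaleR_add_left scaleR_sum_right sum.distrib mult.commute)
  finally show ?thesis .
qed

lemma sum_axis_scaleR:
  fixes f :: "'k::finite \<Rightarrow> 'a::real_vector"
  shows "(\<Sum>i\<in>UNIV. (axis j c $ i) *\<^sub>R f i) = c *\<^sub>R f j"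
proof -
  have "(\<Sum>i\<in>UNIV. (axis j c $ i) *\<^sub>R f i) = (\<Sum>i\<in>UNIV. if i = j then c *\<^sub>R f i else 0)"
    by (intro sum.cong) (auto simp: axis_def)
  then show ?thesis by simp
qed

lemma first_normal_space_eq_orth_proj_image:
  fixes f :: "'b::real_normed_vector \<Rightarrow> 'a::euclidean_space"
  shows "first_normal_space f x =
    orth_proj (normal_space f x) ` span {second_deriv f x h k | h k. True}"
proof -
  have P: "linear (orth_proj (normal_space f x))"
    unfolding normal_space_def by (rule linear_orth_proj[OF subspace_orthogonal_comp])
  have "{second_fund_form f x h k | h k. True} =
      orth_proj (normal_space f x) ` {second_deriv f x h k | h k. True}"
    unfolding second_fund_form_def by blast
  then show ?thesis
    unfolding first_normal_space_def by (simp add: linear_span_image[OF P])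
qed

lemma range_frechet_derivative_ruled_map:
  fixes \<gamma> :: "real \<Rightarrow> 'a::euclidean_space" and X :: "'k::finite \<Rightarrow> real \<Rightarrow> 'a"
  assumes \<gamma>: "smooth_curve_on I \<gamma>" and X: "\<forall>j. smooth_curve_on I (X j)" and t: "t \<in> I"
  shows "range (frechet_derivative (ruled_map \<gamma> X) (at (t, u))) =
    span (insert (ruled_map (vderiv 1 \<gamma>) (\<lambda>j. vderiv 1 (X j)) (t, u)) (ruling_distr X t))"
proof -
  let ?A = "ruled_map (vderiv 1 \<gamma>) (\<lambda>j. vderiv 1 (X j)) (t, u)"
  let ?L = "frechet_derivative (ruled_map \<gamma> X) (at (t, u))"
  have deriv: "(ruled_map \<gamma> X has_derivative (\<lambda>h. fst h *\<^sub>R ?A + (\<Sum>j\<in>UNIV. (snd h $ j) *\<^sub>R X j t)))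
      (at (t, u))"
    by (rule has_derivative_ruled_map_smooth[OF \<gamma> X t])
  have L: "?L h = fst h *\<^sub>R ?A + (\<Sum>j\<in>UNIV. (snd h $ j) *\<^sub>R X j t)" for h
    by (simp add: frechet_derivative_at[OF deriv, symmetric])
  have range_L: "subspace (range ?L)"
    unfolding frechet_derivative_at[OF deriv, symmetric]
    by (rule linear_subspace_image[OF has_derivative_linear[OF deriv] subspace_UNIV])
  show ?thesis
  proof
    show "range ?L \<subseteq> span (insert ?A (ruling_distr X t))"
    proof clarify
      fix h :: "real \<times> (real ^ 'k)"
      have "(\<Sum>j\<in>UNIV. (snd h $ j) *\<^sub>R X j t) \<in> ruling_distr X t"
        unfolding ruling_distr_def by (intro span_sum span_scale span_base) blast
      then show "?L h \<in> span (insert ?A (ruling_distr X t))"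
        unfolding L by (intro span_add span_scale) (auto intro: span_base)
    qed
    have "ruling_distr X t \<subseteq> range ?L"
      unfolding ruling_distr_def
    proof (rule span_minimal[OF _ range_L], clarify)
      fix j
      have "X j t = ?L (0, axis j 1)"
        by (simp add: L sum_axis_scaleR)
      then show "X j t \<in> range ?L" by blast
    qed
    moreover have "?A = ?L (1, 0)"
      by (simp add: L)
    ultimately show "span (insert ?A (ruling_distr X t)) \<subseteq> range ?L"
      by (intro span_minimal[OF _ range_L]) auto
  qed
qed

lemma span_second_deriv_ruled_map:
  fixes \<gamma> :: "real \<Rightarrow> 'a::euclidean_space" and X :: "'k::finite \<Rightarrow> real \<Rightarrow> 'a"
  assumes I: "open I" and \<gamma>: "smooth_curve_on I \<gamma>" and X: "\<forall>j. smooth_curve_on I (X j)"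
    and t: "t \<in> I"
  shows "span {second_deriv (ruled_map \<gamma> X) (t, u) h k | h k. True} =
    span (insert (ruled_map (vderiv 2 \<gamma>) (\<lambda>j. vderiv 2 (X j)) (t, u)) (range (\<lambda>j. vderiv 1 (X j) t)))"
  (is "span ?D2 = span (insert ?B ?R)")
  unfolding span_eq
proof
  show "?D2 \<subseteq> span (insert ?B ?R)"
    unfolding second_deriv_ruled_map[OF I \<gamma> X t]
    by clarify (intro span_add span_scale span_sum span_base; blast)
  have "?B = second_deriv (ruled_map \<gamma> X) (t, u) (1, 0) (1, 0)"
    by (simp add: second_deriv_ruled_map[OF I \<gamma> X t])
  moreover have "vderiv 1 (X j) t = second_deriv (ruled_map \<gamma> X) (t, u) (1, 0) (0, axis j 1)" for j
    by (simp add: second_deriv_ruled_map[OF I \<gamma> X t] sum_axis_scaleR)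
  ultimately have "insert ?B ?R \<subseteq> ?D2"
    by blast
  then show "insert ?B ?R \<subseteq> span ?D2"
    using span_superset by blast
qed

section \<open>Degree of the ruling\<close>

lemma ruling_distr_orthonormal_expansion:
  fixes X :: "'k::finite \<Rightarrow> real \<Rightarrow> 'a::euclidean_space"
  assumes orth: "\<forall>i j. X i s \<bullet> X j s = (if i = j then 1 else 0)"
    and w: "w \<in> ruling_distr X s"
  shows "w = (\<Sum>j\<in>UNIV. (w \<bullet> X j s) *\<^sub>R X j s)"
  using w unfolding ruling_distr_def
proof (induction rule: span_induct)
  case base
  show ?case
    unfolding subspace_def
    by (simp add: inner_add_left scaleR_add_left sum.distrib scaleR_sum_right[symmetric]
        flip: scaleR_scaleR)
next
  case (step x)
  then obtain i where x: "x = X i s" by blast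
  have "(\<Sum>j\<in>UNIV. (X i s \<bullet> X j s) *\<^sub>R X j s) = (\<Sum>j\<in>UNIV. if i = j then X j s else 0)"
    using orth by (intro sum.cong) auto
  then show ?case
    using x by simp
qed

lemma smooth_curve_on_lin_comb:
  fixes X :: "'k::finite \<Rightarrow> real \<Rightarrow> 'a::euclidean_space"
  assumes S: "open S" and X: "\<And>j. smooth_curve_on S (X j)"
  shows "smooth_curve_on S (\<lambda>s. \<Sum>j\<in>UNIV. c j *\<^sub>R X j s)"
proof -
  let ?Y = "\<lambda>s. \<Sum>j\<in>UNIV. c j *\<^sub>R X j s"
  have lin_comb: "((\<lambda>s. \<Sum>j\<in>UNIV. c j *\<^sub>R vderiv k (X j) s) has_vector_derivative
      (\<Sum>j\<in>UNIV. c j *\<^sub>R vderiv (Suc k) (X j) s)) (at s)" if "s \<in> S" for k s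
    by (intro has_vector_derivative_sum bounded_linear.has_vector_derivative[OF bounded_linear_scaleR_right]
        smooth_curve_on_has_vector_derivative[OF X that])
  have vderiv_Y: "\<forall>s\<in>S. vderiv k ?Y s = (\<Sum>j\<in>UNIV. c j *\<^sub>R vderiv k (X j) s)" for k
  proof (induction k)
    case (Suc k)
    show ?case
    proof
      fix s assume s: "s \<in> S"
      have "(vderiv k ?Y has_vector_derivative (\<Sum>j\<in>UNIV. c j *\<^sub>R vderiv (Suc k) (X j) s)) (at s)"
        by (rule has_vector_derivative_transform_within_open[OF lin_comb[OF s] S s]) (use Suc in simp)
      then show "vderiv (Suc k) ?Y s = (\<Sum>j\<in>UNIV. c j *\<^sub>R vderiv (Suc k) (X j) s)"
        by (simp add: vector_derivative_at)
    qed
  qed simp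
  show ?thesis
    unfolding smooth_curve_on_def
  proof (intro allI ballI)
    fix k s assume s: "s \<in> S"
    have "(vderiv k ?Y has_vector_derivative (\<Sum>j\<in>UNIV. c j *\<^sub>R vderiv (Suc k) (X j) s)) (at s)"
      by (rule has_vector_derivative_transform_within_open[OF lin_comb[OF s] S s]) (use vderiv_Y in simp)
    then show "vderiv k ?Y differentiable at s"
      by (rule differentiableI_vector)
  qed
qed

lemma local_section_ruling_distr_lin_comb:
  fixes X :: "'k::finite \<Rightarrow> real \<Rightarrow> 'a::euclidean_space"
  assumes I: "open I" and t: "t \<in> I" and X: "\<forall>j. smooth_curve_on I (X j)"
  shows "local_section (ruling_distr X) t (\<lambda>s. \<Sum>j\<in>UNIV. c j *\<^sub>R X j s)"
proof -
  obtain r where r: "r > 0" "ball t r \<subseteq> I"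
    using I t open_contains_ball by blast
  have "smooth_curve_on (ball t r) (X j)" for j
    using X r(2) unfolding smooth_curve_on_def by blast
  then have "smooth_curve_on (ball t r) (\<lambda>s. \<Sum>j\<in>UNIV. c j *\<^sub>R X j s)"
    by (rule smooth_curve_on_lin_comb[OF open_ball])
  moreover have "(\<Sum>j\<in>UNIV. c j *\<^sub>R X j s) \<in> ruling_distr X s" for s
    unfolding ruling_distr_def by (intro span_sum span_scale span_base) blast
  ultimately show ?thesis
    unfolding local_section_def using r(1) by blast
qed

lemma rho_map_eqI:
  assumes V0: "local_section E t V0" "V0 t = v"
    and all: "\<And>V. local_section E t V \<Longrightarrow> V t = v \<Longrightarrow>
      orth_proj ((E t)\<^sup>\<bottom>) (vector_derivative V (at t)) = w"
  shows "rho_map E t v = w"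
  unfolding rho_map_def
proof (rule the_equality)
  show "\<forall>V. local_section E t V \<and> V t = v \<longrightarrow>
      orth_proj ((E t)\<^sup>\<bottom>) (vector_derivative V (at t)) = w"
    using all by blast
next
  fix w' assume "\<forall>V. local_section E t V \<and> V t = v \<longrightarrow>
      orth_proj ((E t)\<^sup>\<bottom>) (vector_derivative V (at t)) = w'"
  then have "orth_proj ((E t)\<^sup>\<bottom>) (vector_derivative V0 (at t)) = w'"
    using V0 by blast
  then show "w' = w"
    using all[OF V0] by simp
qed

text \<open>Expanding a section in the moving frame, V = \<Sum>j (V \<bullet> X j) X j, the product rule produces
  terms along the X j, which the projection kills, plus \<Sum>j (V \<bullet> X j) X j'.\<close>
lemma orth_proj_vector_derivative_ruling_section:
  fixes X :: "'k::finite \<Rightarrow> real \<Rightarrow> 'a::euclidean_space"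
  assumes I: "open I" and t: "t \<in> I" and X: "\<forall>j. smooth_curve_on I (X j)"
    and orth: "\<forall>t\<in>I. \<forall>i j. X i t \<bullet> X j t = (if i = j then 1 else 0)"
    and V: "local_section (ruling_distr X) t V"
  shows "orth_proj ((ruling_distr X t)\<^sup>\<bottom>) (vector_derivative V (at t)) =
    orth_proj ((ruling_distr X t)\<^sup>\<bottom>) (\<Sum>j\<in>UNIV. (V t \<bullet> X j t) *\<^sub>R vderiv 1 (X j) t)"
proof -
  let ?Q = "orth_proj ((ruling_distr X t)\<^sup>\<bottom>)"
  have Q: "linear ?Q"
    by (rule linear_orth_proj[OF subspace_orthogonal_comp])
  have QX: "?Q (X j t) = 0" for j
  proof (rule orth_proj_eq_0[OF subspace_orthogonal_comp])
    have "X j t \<in> ruling_distr X t"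
      unfolding ruling_distr_def by (rule span_base) blast
    then show "X j t \<in> (ruling_distr X t)\<^sup>\<bottom>\<^sup>\<bottom>"
      using orthogonal_comp_subset[of "ruling_distr X t"] by blast
  qed
  obtain e where e: "e > 0" "smooth_curve_on (ball t e) V" "\<forall>s\<in>ball t e. V s \<in> ruling_distr X s"
    using V unfolding local_section_def by blast
  obtain r where r: "r > 0" "ball t r \<subseteq> I"
    using I t open_contains_ball by blast
  let ?V' = "vector_derivative V (at t)"
  have V': "(V has_vector_derivative ?V') (at t)"
    using smooth_curve_on_has_vector_derivative[OF e(2), of t 0] e(1) by simp
  have X': "(X j has_vector_derivative vderiv 1 (X j) t) (at t)" for j
    using smooth_curve_on_has_vector_derivative_1[OF X[rule_format] t] .
  let ?W = "\<lambda>s. \<Sum>j\<in>UNIV. (V s \<bullet> X j s) *\<^sub>R X j s"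
  let ?Z = "\<Sum>j\<in>UNIV. (V t \<bullet> X j t) *\<^sub>R vderiv 1 (X j) t +
    (V t \<bullet> vderiv 1 (X j) t + ?V' \<bullet> X j t) *\<^sub>R X j t"
  have "(?W has_vector_derivative ?Z) (at t)"
    by (intro has_vector_derivative_sum bounded_bilinear.has_vector_derivative[OF bounded_bilinear_scaleR]
        bounded_bilinear.has_vector_derivative[OF bounded_bilinear_inner] V' X')
  moreover have "(?W has_vector_derivative ?V') (at t)"
  proof (rule has_vector_derivative_transform_within_open[OF V'])
    show "open (ball t (min e r))" "t \<in> ball t (min e r)"
      using e(1) r(1) by auto
    fix s assume "s \<in> ball t (min e r)"
    then show "V s = ?W s"
      using e(3) r(2) orth by (intro ruling_distr_orthonormal_expansion) auto
  qed
  ultimately have "?Z = ?V'"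
    by (rule vector_derivative_unique_at)
  then have "?Q ?V' = ?Q ?Z"
    by simp
  then show ?thesis
    by (simp add: linear_sum[OF Q] linear_scale[OF Q] linear_add[OF Q] QX)
qed

lemma rho_map_ruling_distr:
  fixes X :: "'k::finite \<Rightarrow> real \<Rightarrow> 'a::euclidean_space"
  assumes I: "open I" and t: "t \<in> I" and X: "\<forall>j. smooth_curve_on I (X j)"
    and orth: "\<forall>t\<in>I. \<forall>i j. X i t \<bullet> X j t = (if i = j then 1 else 0)"
    and v: "v \<in> ruling_distr X t"
  shows "rho_map (ruling_distr X) t v =
    orth_proj ((ruling_distr X t)\<^sup>\<bottom>) (\<Sum>j\<in>UNIV. (v \<bullet> X j t) *\<^sub>R vderiv 1 (X j) t)"
proof (rule rho_map_eqI)
  show "local_section (ruling_distr X) t (\<lambda>s. \<Sum>j\<in>UNIV. (v \<bullet> X j t) *\<^sub>R X j s)"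
    by (rule local_section_ruling_distr_lin_comb[OF I t X])
  show "(\<Sum>j\<in>UNIV. (v \<bullet> X j t) *\<^sub>R X j t) = v"
    using ruling_distr_orthonormal_expansion[OF bspec[OF orth t] v] by simp
qed (use orth_proj_vector_derivative_ruling_section[OF I t X orth] in simp)

lemma degree_at_ruling_distr:
  fixes X :: "'k::finite \<Rightarrow> real \<Rightarrow> 'a::euclidean_space"
  assumes I: "open I" and t: "t \<in> I" and X: "\<forall>j. smooth_curve_on I (X j)"
    and orth: "\<forall>t\<in>I. \<forall>i j. X i t \<bullet> X j t = (if i = j then 1 else 0)"
  shows "degree_at (ruling_distr X) t =
    dim (orth_proj ((ruling_distr X t)\<^sup>\<bottom>) ` span (range (\<lambda>j. vderiv 1 (X j) t)))"
proof -
  define M where "M v = (\<Sum>j\<in>UNIV. (v \<bullet> X j t) *\<^sub>R vderiv 1 (X j) t)" for v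
  have M: "linear M"
    by (rule linearI) (simp_all add: M_def inner_add_left scaleR_add_left sum.distrib scaleR_sum_right)
  have "M (X i t) = vderiv 1 (X i) t" for i
  proof -
    have "M (X i t) = (\<Sum>j\<in>UNIV. if i = j then vderiv 1 (X j) t else 0)"
      unfolding M_def using bspec[OF orth t] by (intro sum.cong) auto
    then show ?thesis by simp
  qed
  then have "M ` ruling_distr X t = span (range (\<lambda>j. vderiv 1 (X j) t))"
    unfolding ruling_distr_def linear_span_image[OF M, symmetric] image_image by simp
  moreover have "rho_map (ruling_distr X) t ` ruling_distr X t =
      orth_proj ((ruling_distr X t)\<^sup>\<bottom>) ` M ` ruling_distr X t"
    using rho_map_ruling_distr[OF I t X orth] unfolding M_def image_image by simp
  ultimately show ?thesis
    unfolding degree_at_def by simp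
qed

theorem mainTheorem3:
  fixes I :: "real set"
    and \<gamma> :: "real \<Rightarrow> 'a::euclidean_space"
    and X :: "'k::finite \<Rightarrow> real \<Rightarrow> 'a"
    and d :: nat
  assumes I: "open I" "is_interval I" "I \<noteq> {}"
    and \<gamma>_smooth: "smooth_curve_on I \<gamma>"
    and unit_speed: "\<forall>t\<in>I. norm (vector_derivative \<gamma> (at t)) = 1"
    and X_smooth: "\<forall>j. smooth_curve_on I (X j)"
    and X_orthonormal: "\<forall>t\<in>I. \<forall>i j. X i t \<bullet> X j t = (if i = j then 1 else 0)"
    and degree: "\<forall>t\<in>I. degree_at (ruling_distr X) t = d"
  shows "\<forall>t\<in>I. \<forall>u. regular_point (ruled_map \<gamma> X) (t, u) \<longrightarrow>
           int d - 1 \<le> int (dim (first_normal_space (ruled_map \<gamma> X) (t, u))) \<and>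
           dim (first_normal_space (ruled_map \<gamma> X) (t, u)) \<le> d + 1"
proof (intro ballI allI impI)
  fix t u assume t: "t \<in> I"
  let ?D = "ruling_distr X t"
  let ?A = "ruled_map (vderiv 1 \<gamma>) (\<lambda>j. vderiv 1 (X j)) (t, u)"
  let ?B = "ruled_map (vderiv 2 \<gamma>) (\<lambda>j. vderiv 2 (X j)) (t, u)"
  let ?R = "range (\<lambda>j. vderiv 1 (X j) t)"
  let ?P = "orth_proj ((span (insert ?A ?D))\<^sup>\<bottom>)"
  have first_normal: "first_normal_space (ruled_map \<gamma> X) (t, u) = ?P ` span (insert ?B ?R)"
    unfolding first_normal_space_eq_orth_proj_image normal_space_def
      range_frechet_derivative_ruled_map[OF \<gamma>_smooth X_smooth t]
      span_second_deriv_ruled_map[OF I(1) \<gamma>_smooth X_smooth t] ..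
  have D: "subspace ?D"
    unfolding ruling_distr_def by (rule subspace_span)
  have "d = dim (orth_proj (?D\<^sup>\<bottom>) ` span ?R)"
    using degree t degree_at_ruling_distr[OF I(1) t X_smooth X_orthonormal] by simp
  then show "int d - 1 \<le> int (dim (first_normal_space (ruled_map \<gamma> X) (t, u))) \<and>
      dim (first_normal_space (ruled_map \<gamma> X) (t, u)) \<le> d + 1"
    using dim_linear_image_span_insert[where R = ?R and b = ?B,
        OF linear_orth_proj[OF subspace_orthogonal_comp[of "span (insert ?A ?D)"]]]
      dim_orth_proj_orthogonal_comp_image[OF D, where a = ?A and S = "span ?R"]
    unfolding first_normal by linarith
qed

end
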